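(* Let $\mathcal I$ and $\mathcal J$ be ideals on $\omega$ and let $X$ be a normal space. (1) If $\mathcal I\neq\mathcal J$, then $\mathrm{non}(\mathcal I\text{-p},\mathcal J\text{-u})=\mathrm{non}(\mathcal I\text{-qn},\mathcal J\text{-u})=\mathrm{non}(\mathcal I\text{-}\sigma\text{-u},\mathcal J\text{-u})=1$. (2) $X\in(\mathcal I\text{-p},\mathcal I\text{-u})\iff X\in(\mathcal I\text{-qn},\mathcal I\text{-u})\iff X\in(\mathcal I\text{-}\sigma\text{-u},\mathcal I\text{-u})\iff |X|<\omega$. (3) $\mathrm{non}(\mathcal I\text{-p},\mathcal I\text{-u})=\mathrm{non}(\mathcal I\text{-qn},\mathcal I\text{-u})=\mathrm{non}(\mathcal I\text{-}\sigma\text{-u},\mathcal I\text{-u})=\omega$. (4) There is no infinite normal space in any of the classes $(\mathcal I\text{-p},\mathcal I\text{-u})$, $(\mathcal I\text{-qn},\mathcal I\text{-u})$, $(\mathcal I\text{-}\sigma\text{-u},\mathcal I\text{-u})$.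
   Context: An ideal on $\omega$ is a family $\mathcal I\subseteq\mathcal P(\omega)$ closed under finite unions and subsets, containing all finite sets, with $\omega\notin\mathcal I$. For an ideal $\mathcal I$ on $\omega$, a real sequence $(a_n)$ is $\mathcal I$-convergent to $0$ if $\{n:|a_n|\ge\varepsilon\}\in\mathcal I$ for every $\varepsilon>0$. For a sequence $(f_n)$ of real-valued functions on a set $X$: $(f_n)$ is $\mathcal I$-pointwise convergent to $0$ (written $\mathcal I$-p) if $(f_n(x))$ is $\mathcal I$-convergent to $0$ for every $x\in X$; $\mathcal I$-uniformly convergent to $0$ ($\mathcal I$-u) if $\{n:\exists x\in X\,(|f_n(x)|\ge\varepsilon)\}\in\mathcal I$ for every $\varepsilon>0$; $\mathcal I$-$\sigma$-uniformly convergent to $0$ ($\mathcal I$-$\sigma$-u) if there are sets $X_k$ ($k\in\omega$) with $\bigcup_k X_k=X$ such that $(f_n\restriction X_k)$ is $\mathcal I$-uniformly convergent to $0$ for every $k$; $\mathcal I$-quasi-normally convergent to $0$ ($\mathcal I$-qn) if there is a sequence $(\varepsilon_n)$ of positive reals $\mathcal I$-convergent to $0$ such that $\{n:|f_n(x)|\ge\varepsilon_n\}\in\mathcal I$ for every $x\in X$. $\mathcal C(X)$ denotes the set of continuous real-valued functions on a space $X$. A normal space is a Hausdorff space in which any two disjoint closed sets have disjoint open neighbourhoods. For two convergence notions $\alpha,\beta$ from the list above (possibly with different ideals), $(\alpha,\beta)$ is the class of all normal spaces $X$ such that for every sequence $(f_n)$ in $\mathcal C(X)$, $(f_n)$ converges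 to $0$ in sense $\alpha$ iff it converges to $0$ in sense $\beta$; $\mathrm{non}(\alpha,\beta)$ is the least cardinality of a normal space not in $(\alpha,\beta)$ (and $\infty$ if there is none). *)

theory Defs
  imports "HOL-Analysis.Analysis"
begin

definition ideal_on_nat :: "nat set set \<Rightarrow> bool" where
  "ideal_on_nat I \<longleftrightarrow>
     (\<forall>A B. A \<in> I \<longrightarrow> B \<in> I \<longrightarrow> A \<union> B \<in> I) \<and>
     (\<forall>A B. A \<in> I \<longrightarrow> B \<subseteq> A \<longrightarrow> B \<in> I) \<and>
     (\<forall>A. finite A \<longrightarrow> A \<in> I) \<and>
     UNIV \<notin> I"

definition Iconv0 :: "nat set set \<Rightarrow> (nat \<Rightarrow> real) \<Rightarrow> bool" where
  "Iconv0 I a \<longleftrightarrow> (\<forall>\<epsilon>>0. {n. \<bar>a n\<bar> \<ge> \<epsilon>} \<in> I)"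

definition Iu_on :: "nat set set \<Rightarrow> 'a set \<Rightarrow> (nat \<Rightarrow> 'a \<Rightarrow> real) \<Rightarrow> bool" where
  "Iu_on I S f \<longleftrightarrow> (\<forall>\<epsilon>>0. {n. \<exists>x\<in>S. \<bar>f n x\<bar> \<ge> \<epsilon>} \<in> I)"

definition Ip :: "nat set set \<Rightarrow> 'a topology \<Rightarrow> (nat \<Rightarrow> 'a \<Rightarrow> real) \<Rightarrow> bool" where
  "Ip I X f \<longleftrightarrow> (\<forall>x\<in>topspace X. Iconv0 I (\<lambda>n. f n x))"

definition Iu :: "nat set set \<Rightarrow> 'a topology \<Rightarrow> (nat \<Rightarrow> 'a \<Rightarrow> real) \<Rightarrow> bool" where
  "Iu I X f \<longleftrightarrow> Iu_on I (topspace X) f"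

definition Isigu :: "nat set set \<Rightarrow> 'a topology \<Rightarrow> (nat \<Rightarrow> 'a \<Rightarrow> real) \<Rightarrow> bool" where
  "Isigu I X f \<longleftrightarrow>
     (\<exists>Xk :: nat \<Rightarrow> 'a set. (\<Union>k. Xk k) = topspace X \<and> (\<forall>k. Iu_on I (Xk k) f))"

definition Iqn :: "nat set set \<Rightarrow> 'a topology \<Rightarrow> (nat \<Rightarrow> 'a \<Rightarrow> real) \<Rightarrow> bool" where
  "Iqn I X f \<longleftrightarrow>
     (\<exists>e :: nat \<Rightarrow> real. (\<forall>n. e n > 0) \<and> Iconv0 I e \<and>
        (\<forall>x\<in>topspace X. {n. \<bar>f n x\<bar> \<ge> e n} \<in> I))"

definition normal_T2 :: "'a topology \<Rightarrow> bool" where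
  "normal_T2 X \<longleftrightarrow> Hausdorff_space X \<and> normal_space X"

definition in_class ::
  "('a topology \<Rightarrow> (nat \<Rightarrow> 'a \<Rightarrow> real) \<Rightarrow> bool) \<Rightarrow>
   ('a topology \<Rightarrow> (nat \<Rightarrow> 'a \<Rightarrow> real) \<Rightarrow> bool) \<Rightarrow> 'a topology \<Rightarrow> bool" where
  "in_class \<alpha> \<beta> X \<longleftrightarrow> normal_T2 X \<and>
     (\<forall>f. (\<forall>n. continuous_map X euclideanreal (f n)) \<longrightarrow> (\<alpha> X f \<longleftrightarrow> \<beta> X f))"

end

theory Submission
  imports Defs
begin

text \<open>On a finite space a finite union of index sets in \<open>I\<close> is in \<open>I\<close>, so pointwise
  \<open>I\<close>-convergence is already \<open>I\<close>-uniform; conversely an \<open>I\<close>-uniformly convergent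
  sequence is \<open>I\<close>-quasi-normally convergent with control sequence
  \<open>sup\<^sub>x min 1 \<bar>f\<^sub>n x\<bar> + 1/(n+1)\<close>. Hence all four notions agree on finite spaces.

  An infinite Hausdorff space contains pairwise disjoint nonempty open sets \<open>U\<^sub>n\<close>, and
  Urysohn's lemma gives continuous \<open>f\<^sub>n\<close> vanishing off \<open>U\<^sub>n\<close> with value 1 somewhere.
  Every point meets at most one \<open>U\<^sub>n\<close>, so \<open>(f\<^sub>n)\<close> converges pointwise,
  quasi-normally, and uniformly on each set of points missing all \<open>U\<^sub>n\<close> with
  \<open>n \<ge> k\<close>; yet it is never \<open>I\<close>-uniformly convergent.

  For \<open>I \<noteq> J\<close>, a set \<open>A\<close> in one ideal but not the other makes the constant
  sequence \<open>indicator A n\<close> on a one-point space \<open>I\<close>-uniformly but not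
  \<open>J\<close>-uniformly convergent, or vice versa.\<close>

lemma ideal_on_nat_finite: "ideal_on_nat I \<Longrightarrow> finite A \<Longrightarrow> A \<in> I"
  by (simp add: ideal_on_nat_def)

lemma ideal_on_nat_subset: "ideal_on_nat I \<Longrightarrow> A \<in> I \<Longrightarrow> B \<subseteq> A \<Longrightarrow> B \<in> I"
  unfolding ideal_on_nat_def by blast

lemma ideal_on_nat_Un: "ideal_on_nat I \<Longrightarrow> A \<in> I \<Longrightarrow> B \<in> I \<Longrightarrow> A \<union> B \<in> I"
  unfolding ideal_on_nat_def by blast

lemma ideal_on_nat_UNIV: "ideal_on_nat I \<Longrightarrow> UNIV \<notin> I"
  unfolding ideal_on_nat_def by blast

lemma Iconv0D: "Iconv0 I a \<Longrightarrow> \<epsilon> > 0 \<Longrightarrow> {n. \<bar>a n\<bar> \<ge> \<epsilon>} \<in> I"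
  unfolding Iconv0_def by blast

lemma Iu_onD: "Iu_on I S f \<Longrightarrow> \<epsilon> > 0 \<Longrightarrow> {n. \<exists>x\<in>S. \<bar>f n x\<bar> \<ge> \<epsilon>} \<in> I"
  unfolding Iu_on_def by blast

lemma Iconv0_if_LIMSEQ:
  assumes I: "ideal_on_nat I" and lim: "a \<longlonglongrightarrow> 0"
  shows "Iconv0 I a"
  unfolding Iconv0_def
proof (intro allI impI)
  fix \<epsilon> :: real assume "\<epsilon> > 0"
  then have "eventually (\<lambda>n. \<bar>a n\<bar> < \<epsilon>) cofinite"
    using order_tendstoD(2)[OF tendsto_rabs_zero[OF lim]] by (simp add: cofinite_eq_sequentially)
  then show "{n. \<bar>a n\<bar> \<ge> \<epsilon>} \<in> I"
    by (simp add: eventually_cofinite not_less ideal_on_nat_finite[OF I])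
qed

lemma Iconv0_inverse_Suc: "ideal_on_nat I \<Longrightarrow> Iconv0 I (\<lambda>n. inverse (real (Suc n)))"
  by (rule Iconv0_if_LIMSEQ[OF _ LIMSEQ_inverse_real_of_nat])

lemma Iconv0_add:
  assumes I: "ideal_on_nat I" and "Iconv0 I a" and "Iconv0 I b"
  shows "Iconv0 I (\<lambda>n. a n + b n)"
  unfolding Iconv0_def
proof (intro allI impI)
  fix \<epsilon> :: real assume "\<epsilon> > 0"
  then have "\<epsilon> / 2 > 0"
    by simp
  then have "{n. \<bar>a n\<bar> \<ge> \<epsilon> / 2} \<union> {n. \<bar>b n\<bar> \<ge> \<epsilon> / 2} \<in> I"
    by (intro ideal_on_nat_Un[OF I] Iconv0D[OF assms(2)] Iconv0D[OF assms(3)])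
  moreover have "{n. \<bar>a n + b n\<bar> \<ge> \<epsilon>} \<subseteq> {n. \<bar>a n\<bar> \<ge> \<epsilon> / 2} \<union> {n. \<bar>b n\<bar> \<ge> \<epsilon> / 2}"
    by auto
  ultimately show "{n. \<bar>a n + b n\<bar> \<ge> \<epsilon>} \<in> I"
    by (rule ideal_on_nat_subset[OF I])
qed

lemma Iu_on_empty: "ideal_on_nat I \<Longrightarrow> Iu_on I {} f"
  by (simp add: Iu_on_def ideal_on_nat_finite)

lemma Iu_on_subset:
  assumes I: "ideal_on_nat I" and "Iu_on I T f" and "S \<subseteq> T"
  shows "Iu_on I S f"
  unfolding Iu_on_def
proof (intro allI impI)
  fix \<epsilon> :: real assume "\<epsilon> > 0"
  then have "{n. \<exists>x\<in>T. \<bar>f n x\<bar> \<ge> \<epsilon>} \<in> I"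
    using \<open>Iu_on I T f\<close> unfolding Iu_on_def by blast
  moreover have "{n. \<exists>x\<in>S. \<bar>f n x\<bar> \<ge> \<epsilon>} \<subseteq> {n. \<exists>x\<in>T. \<bar>f n x\<bar> \<ge> \<epsilon>}"
    using \<open>S \<subseteq> T\<close> by blast
  ultimately show "{n. \<exists>x\<in>S. \<bar>f n x\<bar> \<ge> \<epsilon>} \<in> I"
    by (rule ideal_on_nat_subset[OF I])
qed

lemma Iu_on_Un: "ideal_on_nat I \<Longrightarrow> Iu_on I S f \<Longrightarrow> Iu_on I T f \<Longrightarrow> Iu_on I (S \<union> T) f"
  unfolding Iu_on_def by (simp add: bex_Un Collect_disj_eq ideal_on_nat_Un)

lemma Iu_on_singleton_iff: "Iu_on I {x} f \<longleftrightarrow> Iconv0 I (\<lambda>n. f n x)"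
  by (simp add: Iu_on_def Iconv0_def)

lemma Iu_on_finite:
  assumes I: "ideal_on_nat I" and "finite S" and "\<forall>x\<in>S. Iconv0 I (\<lambda>n. f n x)"
  shows "Iu_on I S f"
  using assms(2,3)
proof (induction S rule: finite_induct)
  case empty
  show ?case by (rule Iu_on_empty[OF I])
next
  case (insert x S)
  then have "Iu_on I {x} f" "Iu_on I S f"
    by (simp_all add: Iu_on_singleton_iff)
  then show ?case
    using Iu_on_Un[OF I] by (metis insert_is_Un)
qed

lemma Iu_imp_Isigu: "Iu I X f \<Longrightarrow> Isigu I X f"
  unfolding Isigu_def Iu_def by (intro exI[of _ "\<lambda>k. topspace X"]) simp

lemma Isigu_imp_Ip:
  assumes I: "ideal_on_nat I" and "Isigu I X f"
  shows "Ip I X f"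
  unfolding Ip_def
proof
  fix x assume "x \<in> topspace X"
  obtain Xk :: "nat \<Rightarrow> 'a set" where Xk: "(\<Union>k. Xk k) = topspace X" "\<And>k. Iu_on I (Xk k) f"
    using \<open>Isigu I X f\<close> unfolding Isigu_def by blast
  obtain k where "x \<in> Xk k"
    using \<open>x \<in> topspace X\<close> Xk(1) by auto
  then have "Iu_on I {x} f"
    using Iu_on_subset[OF I Xk(2)] by simp
  then show "Iconv0 I (\<lambda>n. f n x)"
    by (simp add: Iu_on_singleton_iff)
qed

lemma Iu_imp_Ip: "ideal_on_nat I \<Longrightarrow> Iu I X f \<Longrightarrow> Ip I X f"
  by (simp add: Isigu_imp_Ip Iu_imp_Isigu)

lemma Iqn_imp_Ip:
  assumes I: "ideal_on_nat I" and "Iqn I X f"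
  shows "Ip I X f"
  unfolding Ip_def Iconv0_def
proof (intro ballI allI impI)
  fix x and \<epsilon> :: real assume x: "x \<in> topspace X" and "\<epsilon> > 0"
  obtain e where e: "\<forall>n. e n > 0" "Iconv0 I e" "\<forall>x\<in>topspace X. {n. \<bar>f n x\<bar> \<ge> e n} \<in> I"
    using \<open>Iqn I X f\<close> unfolding Iqn_def by blast
  have "{n. \<bar>f n x\<bar> \<ge> e n} \<union> {n. \<bar>e n\<bar> \<ge> \<epsilon>} \<in> I"
    using e(2,3) x \<open>\<epsilon> > 0\<close> unfolding Iconv0_def by (simp add: ideal_on_nat_Un[OF I])
  moreover have "{n. \<bar>f n x\<bar> \<ge> \<epsilon>} \<subseteq> {n. \<bar>f n x\<bar> \<ge> e n} \<union> {n. \<bar>e n\<bar> \<ge> \<epsilon>}"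
  proof
    fix n assume "n \<in> {n. \<bar>f n x\<bar> \<ge> \<epsilon>}"
    then show "n \<in> {n. \<bar>f n x\<bar> \<ge> e n} \<union> {n. \<bar>e n\<bar> \<ge> \<epsilon>}"
      using e(1)[rule_format, of n] by (simp add: abs_of_pos) linarith
  qed
  ultimately show "{n. \<bar>f n x\<bar> \<ge> \<epsilon>} \<in> I"
    by (rule ideal_on_nat_subset[OF I])
qed

lemma Ip_imp_Iu_finite:
  assumes "ideal_on_nat I" and "finite (topspace X)" and "Ip I X f"
  shows "Iu I X f"
  using assms(3) unfolding Ip_def Iu_def by (rule Iu_on_finite[OF assms(1,2)])

text \<open>Truncating at 1 keeps the supremum finite, and inserting 0 avoids the junk value
  \<open>Sup {}\<close> on an empty set.\<close>
definition sup_trunc_abs :: "'a set \<Rightarrow> ('a \<Rightarrow> real) \<Rightarrow> real" where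
  "sup_trunc_abs S g = Sup (insert 0 ((\<lambda>x. min 1 \<bar>g x\<bar>) ` S))"

lemma bdd_above_trunc_abs: "bdd_above (insert 0 ((\<lambda>x. min 1 \<bar>g x :: real\<bar>) ` S))"
  by (rule bdd_aboveI[of _ 1]) auto

lemma sup_trunc_abs_upper: "x \<in> S \<Longrightarrow> min 1 \<bar>g x\<bar> \<le> sup_trunc_abs S g"
  unfolding sup_trunc_abs_def by (intro cSup_upper bdd_above_trunc_abs) auto

lemma sup_trunc_abs_nonneg: "0 \<le> sup_trunc_abs S g"
  unfolding sup_trunc_abs_def by (intro cSup_upper bdd_above_trunc_abs) auto

lemma less_sup_trunc_abs: "0 \<le> c \<Longrightarrow> c < sup_trunc_abs S g \<Longrightarrow> \<exists>x\<in>S. c < \<bar>g x\<bar>"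
  unfolding sup_trunc_abs_def less_cSup_iff[OF insert_not_empty bdd_above_trunc_abs] by auto

lemma Iconv0_sup_trunc_abs:
  assumes I: "ideal_on_nat I" and u: "Iu_on I S f"
  shows "Iconv0 I (\<lambda>n. sup_trunc_abs S (f n))"
  unfolding Iconv0_def
proof (intro allI impI)
  fix \<epsilon> :: real assume "\<epsilon> > 0"
  then have "{n. \<exists>x\<in>S. \<bar>f n x\<bar> \<ge> \<epsilon> / 2} \<in> I"
    by (intro Iu_onD[OF u]) simp
  moreover have "{n. \<bar>sup_trunc_abs S (f n)\<bar> \<ge> \<epsilon>} \<subseteq> {n. \<exists>x\<in>S. \<bar>f n x\<bar> \<ge> \<epsilon> / 2}"
  proof
    fix n assume "n \<in> {n. \<bar>sup_trunc_abs S (f n)\<bar> \<ge> \<epsilon>}"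
    then have "\<epsilon> / 2 < sup_trunc_abs S (f n)"
      using sup_trunc_abs_nonneg[of S "f n"] \<open>\<epsilon> > 0\<close> by simp
    then show "n \<in> {n. \<exists>x\<in>S. \<bar>f n x\<bar> \<ge> \<epsilon> / 2}"
      using less_sup_trunc_abs[of "\<epsilon> / 2" S "f n"] \<open>\<epsilon> > 0\<close> by (auto intro: less_imp_le)
  qed
  ultimately show "{n. \<bar>sup_trunc_abs S (f n)\<bar> \<ge> \<epsilon>} \<in> I"
    by (rule ideal_on_nat_subset[OF I])
qed

lemma Iu_imp_Iqn:
  assumes I: "ideal_on_nat I" and u: "Iu I X f"
  shows "Iqn I X f"
proof -
  define e where "e n = sup_trunc_abs (topspace X) (f n) + inverse (real (Suc n))" for n
  have "Iconv0 I e"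
    unfolding e_def using u[unfolded Iu_def]
    by (intro Iconv0_add[OF I] Iconv0_sup_trunc_abs[OF I] Iconv0_inverse_Suc[OF I])
  moreover have "e n > 0" for n
    unfolding e_def by (intro add_nonneg_pos sup_trunc_abs_nonneg) simp
  moreover have "{n. \<bar>f n x\<bar> \<ge> e n} \<in> I" if "x \<in> topspace X" for x
  proof -
    have "{n. \<exists>y\<in>topspace X. \<bar>f n y\<bar> \<ge> 1} \<in> I"
      using u unfolding Iu_def by (simp add: Iu_onD)
    moreover have "{n. \<bar>f n x\<bar> \<ge> e n} \<subseteq> {n. \<exists>y\<in>topspace X. \<bar>f n y\<bar> \<ge> 1}"
    proof
      fix n assume n: "n \<in> {n. \<bar>f n x\<bar> \<ge> e n}"
      have "0 < inverse (real (Suc n))"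
        by simp
      then have "min 1 \<bar>f n x\<bar> < e n"
        using sup_trunc_abs_upper[OF that, of "f n"] unfolding e_def by linarith
      with n have "\<bar>f n x\<bar> \<ge> 1"
        by (simp add: min_def split: if_splits)
      then show "n \<in> {n. \<exists>y\<in>topspace X. \<bar>f n y\<bar> \<ge> 1}"
        using that by blast
    qed
    ultimately show ?thesis
      by (rule ideal_on_nat_subset[OF I])
  qed
  ultimately show ?thesis
    unfolding Iqn_def by blast
qed

lemma Isigu_if_finite_support:
  assumes I: "ideal_on_nat I" and fin: "\<And>x. x \<in> topspace X \<Longrightarrow> finite {n. f n x \<noteq> 0}"
  shows "Isigu I X f"
proof -
  define Xk where "Xk k = {x \<in> topspace X. {n. f n x \<noteq> 0} \<subseteq> {..<k}}" for k
  have "(\<Union>k. Xk k) = topspace X"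
    using finite_nat_bounded[OF fin] unfolding Xk_def by blast
  moreover have "Iu_on I (Xk k) f" for k
    unfolding Iu_on_def
  proof (intro allI impI)
    fix \<epsilon> :: real assume "\<epsilon> > 0"
    then have "{n. \<exists>x\<in>Xk k. \<bar>f n x\<bar> \<ge> \<epsilon>} \<subseteq> {..<k}"
      unfolding Xk_def by force
    then show "{n. \<exists>x\<in>Xk k. \<bar>f n x\<bar> \<ge> \<epsilon>} \<in> I"
      by (intro ideal_on_nat_finite[OF I] finite_subset[OF _ finite_lessThan])
  qed
  ultimately show ?thesis
    unfolding Isigu_def by blast
qed

lemma Iqn_if_finite_support:
  assumes I: "ideal_on_nat I" and fin: "\<And>x. x \<in> topspace X \<Longrightarrow> finite {n. f n x \<noteq> 0}"
  shows "Iqn I X f"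
  unfolding Iqn_def
proof (intro exI[of _ "\<lambda>n. inverse (real (Suc n))"] conjI allI ballI)
  show "Iconv0 I (\<lambda>n. inverse (real (Suc n)))"
    by (rule Iconv0_inverse_Suc[OF I])
next
  fix n show "0 < inverse (real (Suc n))"
    by simp
next
  fix x assume "x \<in> topspace X"
  have "{n. \<bar>f n x\<bar> \<ge> inverse (real (Suc n))} \<subseteq> {n. f n x \<noteq> 0}"
    by auto
  then show "{n. \<bar>f n x\<bar> \<ge> inverse (real (Suc n))} \<in> I"
    by (intro ideal_on_nat_finite[OF I] finite_subset[OF _ fin[OF \<open>x \<in> topspace X\<close>]])
qed

lemma not_Iu_if_peaks:
  assumes I: "ideal_on_nat I" and peaks: "\<And>n. \<exists>x\<in>topspace X. \<bar>f n x\<bar> \<ge> 1"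
  shows "\<not> Iu I X f"
proof
  assume "Iu I X f"
  then have "{n. \<exists>x\<in>topspace X. \<bar>f n x\<bar> \<ge> 1} \<in> I"
    unfolding Iu_def by (rule Iu_onD) simp
  moreover have "{n. \<exists>x\<in>topspace X. \<bar>f n x\<bar> \<ge> 1} = UNIV"
    using peaks by blast
  ultimately show False
    using ideal_on_nat_UNIV[OF I] by simp
qed

lemma Hausdorff_space_split_infinite_open:
  assumes H: "Hausdorff_space X" and S: "openin X S" and inf: "infinite S"
  obtains U S' where "openin X U" "U \<noteq> {}" "U \<subseteq> S" "openin X S'" "S' \<subseteq> S" "infinite S'"
    "disjnt U S'"
proof -
  obtain x where "x \<in> S"
    using infinite_imp_nonempty[OF inf] by blast
  moreover obtain y where "y \<in> S - {x}"
    using infinite_imp_nonempty[OF infinite_remove[OF inf]] by blast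
  ultimately have xy: "x \<in> S" "y \<in> S" "x \<noteq> y"
    by auto
  moreover have "S \<subseteq> topspace X"
    using S by (rule openin_subset)
  ultimately obtain U V where UV: "openin X U" "openin X V" "x \<in> U" "y \<in> V" "disjnt U V"
    using H[unfolded Hausdorff_space_def, rule_format, of x y] by auto
  show thesis
  proof (cases "finite (U \<inter> S)")
    case True
    \<comment> \<open>then \<open>x\<close> is isolated, since finite sets are closed in a T1 space\<close>
    have T1: "t1_space X"
      using H by (rule Hausdorff_imp_t1_space)
    have "closedin X (U \<inter> S - {x})"
      using T1[unfolded t1_space_closedin_finite] True \<open>S \<subseteq> topspace X\<close> by blast
    then have "openin X (U \<inter> S - (U \<inter> S - {x}))"
      using openin_Int[OF UV(1) S] by (intro openin_diff)
    moreover have "U \<inter> S - (U \<inter> S - {x}) = {x}"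
      using UV(3) xy(1) by auto
    moreover have "openin X (S - {x})"
      using T1[unfolded t1_space_openin_delete_alt] S by blast
    ultimately show thesis
      using inf xy(1) by (intro that[of "{x}" "S - {x}"]) auto
  next
    case False
    show thesis
      using UV S xy False by (intro that[of "V \<inter> S" "U \<inter> S"]) (auto simp: disjnt_def)
  qed
qed

lemma disjoint_family_if_nested:
  fixes U R :: "nat \<Rightarrow> 'a set"
  assumes "decseq R" and "\<And>n. U n \<subseteq> R n" and "\<And>n. disjnt (U n) (R (Suc n))"
  shows "disjoint_family U"
  unfolding disjoint_family_on_def
proof (intro ballI impI)
  have disj: "U m \<inter> U n = {}" if "m < n" for m n
  proof -
    have "U n \<subseteq> R (Suc m)"
      using assms(2)[of n] decseqD[OF assms(1), of "Suc m" n] that by auto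
    then show ?thesis
      using assms(3)[of m] unfolding disjnt_def by blast
  qed
  fix m n :: nat assume "m \<noteq> n"
  then show "U m \<inter> U n = {}"
    using disj[of m n] disj[of n m] by (cases m n rule: linorder_cases) auto
qed

lemma finite_disjoint_family_members:
  assumes "disjoint_family U"
  shows "finite {i. x \<in> U i}"
proof (cases "\<exists>j. x \<in> U j")
  case True
  then obtain j where "x \<in> U j"
    by blast
  then have "{i. x \<in> U i} \<subseteq> {j}"
    using assms unfolding disjoint_family_on_def by blast
  then show ?thesis
    by (rule finite_subset) simp
qed simp

lemma Hausdorff_space_infinite_disjoint_family:
  assumes H: "Hausdorff_space X" and inf: "infinite (topspace X)"
  obtains U :: "nat \<Rightarrow> 'a set" where "\<And>n. openin X (U n)" "\<And>n. U n \<noteq> {}" "disjoint_family U"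
proof -
  define P where "P S U S' \<longleftrightarrow> openin X U \<and> U \<noteq> {} \<and> U \<subseteq> S \<and> openin X S' \<and> S' \<subseteq> S \<and>
    infinite S' \<and> disjnt U S'" for S U S'
  have "\<exists>U S'. P S U S'" if S: "openin X S" "infinite S" for S
  proof -
    obtain U S' where "openin X U" "U \<noteq> {}" "U \<subseteq> S" "openin X S'" "S' \<subseteq> S" "infinite S'" "disjnt U S'"
      by (rule Hausdorff_space_split_infinite_open[OF H S])
    then show ?thesis
      unfolding P_def by blast
  qed
  then obtain piece rest where split: "\<And>S. openin X S \<Longrightarrow> infinite S \<Longrightarrow> P S (piece S) (rest S)"
    by metis
  define R where "R n = (rest ^^ n) (topspace X)" for n
  have R_Suc: "R (Suc n) = rest (R n)" for n
    unfolding R_def by simp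
  have R: "openin X (R n) \<and> infinite (R n)" for n
  proof (induction n)
    case 0
    show ?case
      using inf by (simp add: R_def)
  next
    case (Suc n)
    then show ?case
      using split[of "R n"] unfolding R_Suc P_def by simp
  qed
  define U where "U n = piece (R n)" for n
  have P: "P (R n) (U n) (R (Suc n))" for n
    using split R unfolding U_def R_Suc by simp
  have "U n \<subseteq> R n" "disjnt (U n) (R (Suc n))" "R (Suc n) \<subseteq> R n" for n
    using P[of n] unfolding P_def by simp_all
  then have "disjoint_family U"
    by (intro disjoint_family_if_nested decseq_SucI)
  moreover have "openin X (U n)" "U n \<noteq> {}" for n
    using P[of n] unfolding P_def by simp_all
  ultimately show thesis
    using that by blast
qed

lemma infinite_normal_space_bump_sequence:
  assumes "normal_T2 Y" and "infinite (topspace Y)"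
  obtains f :: "nat \<Rightarrow> 'a \<Rightarrow> real"
  where "\<And>n. continuous_map Y euclideanreal (f n)"
    and "\<And>x. x \<in> topspace Y \<Longrightarrow> finite {n. f n x \<noteq> 0}"
    and "\<And>n. \<exists>x\<in>topspace Y. f n x = 1"
proof -
  have H: "Hausdorff_space Y" and N: "normal_space Y"
    using assms(1) unfolding normal_T2_def by auto
  obtain U :: "nat \<Rightarrow> 'a set" where U: "\<And>n. openin Y (U n)" "\<And>n. U n \<noteq> {}" "disjoint_family U"
    using Hausdorff_space_infinite_disjoint_family[OF H assms(2)] by metis
  have "\<exists>g. continuous_map Y euclideanreal g \<and> (\<forall>x\<in>topspace Y - U n. g x = 0) \<and>
      (\<exists>x\<in>topspace Y. g x = 1)" for n
  proof -
    obtain a where "a \<in> U n"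
      using U(2) by blast
    then have a: "a \<in> topspace Y"
      using openin_subset[OF U(1)] by blast
    have "closedin Y (topspace Y - U n)"
      using U(1) by (rule closedin_diff[OF closedin_topspace])
    moreover have "closedin Y {a}"
      by (rule closedin_t1_singleton[OF Hausdorff_imp_t1_space[OF H] a])
    moreover have "disjnt (topspace Y - U n) {a}"
      using \<open>a \<in> U n\<close> by (simp add: disjnt_def)
    ultimately obtain g where "continuous_map Y euclideanreal g"
      "g ` (topspace Y - U n) \<subseteq> {0}" "g ` {a} \<subseteq> {1}"
      by (rule Urysohn_lemma_alt[OF N])
    then show ?thesis
      using a by (intro exI[of _ g]) auto
  qed
  then obtain f where f: "\<And>n. continuous_map Y euclideanreal (f n)"
    "\<And>n x. x \<in> topspace Y - U n \<Longrightarrow> f n x = 0" "\<And>n. \<exists>x\<in>topspace Y. f n x = 1"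
    by metis
  have "finite {n. f n x \<noteq> 0}" if "x \<in> topspace Y" for x
  proof -
    have "{n. f n x \<noteq> 0} \<subseteq> {n. x \<in> U n}"
      using f(2) that by blast
    moreover have "finite {n. x \<in> U n}"
      using U(3) by (rule finite_disjoint_family_members)
    ultimately show ?thesis
      by (rule finite_subset)
  qed
  then show thesis
    by (rule that[OF f(1) _ f(3)])
qed

lemma finite_space_Ip_Iqn_Isigu_iff_Iu:
  assumes I: "ideal_on_nat I" and fin: "finite (topspace X)"
  shows "Ip I X f \<longleftrightarrow> Iu I X f" and "Iqn I X f \<longleftrightarrow> Iu I X f" and "Isigu I X f \<longleftrightarrow> Iu I X f"
  using Ip_imp_Iu_finite[OF I fin] Iu_imp_Ip[OF I] Iqn_imp_Ip[OF I] Iu_imp_Iqn[OF I]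
    Isigu_imp_Ip[OF I] Iu_imp_Isigu
  by blast+

lemma in_class_finite_space:
  assumes I: "ideal_on_nat I" and fin: "finite (topspace Y)"
  shows "in_class (Ip I) \<beta> Y \<longleftrightarrow> in_class (Iu I) \<beta> Y"
    and "in_class (Iqn I) \<beta> Y \<longleftrightarrow> in_class (Iu I) \<beta> Y"
    and "in_class (Isigu I) \<beta> Y \<longleftrightarrow> in_class (Iu I) \<beta> Y"
  unfolding in_class_def by (simp_all add: finite_space_Ip_Iqn_Isigu_iff_Iu[OF I fin])

lemma infinite_space_not_in_class:
  assumes I: "ideal_on_nat I" and N: "normal_T2 Y" and inf: "infinite (topspace Y)"
  shows "\<not> in_class (Ip I) (Iu I) Y" and "\<not> in_class (Iqn I) (Iu I) Y"
    and "\<not> in_class (Isigu I) (Iu I) Y"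
proof -
  obtain f :: "nat \<Rightarrow> 'a \<Rightarrow> real" where cont: "\<And>n. continuous_map Y euclideanreal (f n)"
    and fin: "\<And>x. x \<in> topspace Y \<Longrightarrow> finite {n. f n x \<noteq> 0}"
    and peaks: "\<And>n. \<exists>x\<in>topspace Y. f n x = 1"
    using infinite_normal_space_bump_sequence[OF N inf] by metis
  have "Isigu I Y f"
    using fin by (rule Isigu_if_finite_support[OF I])
  moreover have "Iqn I Y f"
    using fin by (rule Iqn_if_finite_support[OF I])
  moreover have "Ip I Y f"
    using Isigu_imp_Ip[OF I] \<open>Isigu I Y f\<close> .
  moreover have "\<not> Iu I Y f"
  proof (rule not_Iu_if_peaks[OF I])
    fix n
    obtain x where "x \<in> topspace Y" "f n x = 1"
      using peaks by blast
    then show "\<exists>x\<in>topspace Y. \<bar>f n x\<bar> \<ge> 1"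
      by (intro bexI[of _ x]) simp_all
  qed
  ultimately show "\<not> in_class (Ip I) (Iu I) Y" and "\<not> in_class (Iqn I) (Iu I) Y"
    and "\<not> in_class (Isigu I) (Iu I) Y"
    using cont unfolding in_class_def by blast+
qed

lemma in_class_Iu_iff_finite:
  assumes I: "ideal_on_nat I" and N: "normal_T2 Y"
  shows "in_class (Ip I) (Iu I) Y \<longleftrightarrow> finite (topspace Y)"
    and "in_class (Iqn I) (Iu I) Y \<longleftrightarrow> finite (topspace Y)"
    and "in_class (Isigu I) (Iu I) Y \<longleftrightarrow> finite (topspace Y)"
proof -
  have "in_class (Iu I) (Iu I) Y"
    using N unfolding in_class_def by simp
  then show "in_class (Ip I) (Iu I) Y \<longleftrightarrow> finite (topspace Y)"
    and "in_class (Iqn I) (Iu I) Y \<longleftrightarrow> finite (topspace Y)"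
    and "in_class (Isigu I) (Iu I) Y \<longleftrightarrow> finite (topspace Y)"
    using in_class_finite_space[OF I] infinite_space_not_in_class[OF I N] by blast+
qed

lemma Iu_indicator_iff:
  assumes I: "ideal_on_nat I" and "topspace X \<noteq> {}"
  shows "Iu I X (\<lambda>n x. indicator A n) \<longleftrightarrow> A \<in> I"
proof
  assume "Iu I X (\<lambda>n x. indicator A n)"
  then have "{n. \<exists>x\<in>topspace X. \<bar>indicator A n :: real\<bar> \<ge> 1} \<in> I"
    unfolding Iu_def by (rule Iu_onD) simp
  moreover obtain x where "x \<in> topspace X"
    using assms(2) by blast
  then have "{n. \<exists>x\<in>topspace X. \<bar>indicator A n :: real\<bar> \<ge> 1} = A"
    by (auto simp: indicator_def)
  ultimately show "A \<in> I"
    by simp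
next
  assume "A \<in> I"
  have "{n. \<exists>x\<in>topspace X. \<bar>indicator A n :: real\<bar> \<ge> \<epsilon>} \<subseteq> A" if "\<epsilon> > 0" for \<epsilon> :: real
    using that by (auto simp: indicator_def)
  then show "Iu I X (\<lambda>n x. indicator A n)"
    unfolding Iu_def Iu_on_def using ideal_on_nat_subset[OF I \<open>A \<in> I\<close>] by blast
qed

lemma not_in_class_Iu_Iu_if_ne:
  assumes I: "ideal_on_nat I" and J: "ideal_on_nat J" and "I \<noteq> J" and "topspace Y \<noteq> {}"
  shows "\<not> in_class (Iu I) (Iu J) Y"
proof -
  obtain A where "A \<in> I \<longleftrightarrow> A \<notin> J"
    using \<open>I \<noteq> J\<close> by blast
  then have "\<not> (Iu I Y (\<lambda>n x. indicator A n) \<longleftrightarrow> Iu J Y (\<lambda>n x. indicator A n))"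
    using Iu_indicator_iff[OF I assms(4)] Iu_indicator_iff[OF J assms(4)] by blast
  moreover have "\<forall>n. continuous_map Y euclideanreal (\<lambda>x. indicator A n :: real)"
    by simp
  ultimately show ?thesis
    unfolding in_class_def by (metis (no_types, lifting))
qed

lemma in_class_Iu_Iu_empty_space:
  assumes I: "ideal_on_nat I" and J: "ideal_on_nat J" and "normal_T2 Y" and "topspace Y = {}"
  shows "in_class (Iu I) (Iu J) Y"
  using assms(3,4) unfolding in_class_def Iu_def by (simp add: Iu_on_empty I J)

lemma normal_T2_discrete_topology: "normal_T2 (discrete_topology U)"
  unfolding normal_T2_def by (simp add: normal_space_discrete_topology)

theorem corollary3p5:
  fixes I J :: "nat set set" and X :: "'a topology"
  assumes "ideal_on_nat I" and "ideal_on_nat J" and "normal_T2 X"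
  shows
   \<comment> \<open>(1): non(...) = 1 when I ~= J: every normal space of cardinality < 1 is in the class,
       and some one-point normal space is not\<close>
   "(I \<noteq> J \<longrightarrow>
      ((\<forall>Y :: 'b topology. normal_T2 Y \<and> topspace Y = {} \<longrightarrow>
          in_class (Ip I) (Iu J) Y \<and> in_class (Iqn I) (Iu J) Y \<and> in_class (Isigu I) (Iu J) Y) \<and>
       (\<exists>Y :: nat topology. normal_T2 Y \<and> card (topspace Y) = 1 \<and> \<not> in_class (Ip I) (Iu J) Y) \<and>
       (\<exists>Y :: nat topology. normal_T2 Y \<and> card (topspace Y) = 1 \<and> \<not> in_class (Iqn I) (Iu J) Y) \<and>
       (\<exists>Y :: nat topology. normal_T2 Y \<and> card (topspace Y) = 1 \<and> \<not> in_class (Isigu I) (Iu J) Y)))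
    \<and>
   \<comment> \<open>(2)\<close>
    (in_class (Ip I) (Iu I) X \<longleftrightarrow> in_class (Iqn I) (Iu I) X) \<and>
    (in_class (Iqn I) (Iu I) X \<longleftrightarrow> in_class (Isigu I) (Iu I) X) \<and>
    (in_class (Isigu I) (Iu I) X \<longleftrightarrow> finite (topspace X))
    \<and>
   \<comment> \<open>(3): non(...) = omega: every finite normal space is in the class,
       and some countably infinite normal space is not\<close>
    ((\<forall>Y :: 'b topology. normal_T2 Y \<and> finite (topspace Y) \<longrightarrow>
          in_class (Ip I) (Iu I) Y \<and> in_class (Iqn I) (Iu I) Y \<and> in_class (Isigu I) (Iu I) Y) \<and>
     (\<exists>Y :: nat topology. normal_T2 Y \<and> infinite (topspace Y) \<and> \<not> in_class (Ip I) (Iu I) Y) \<and>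
     (\<exists>Y :: nat topology. normal_T2 Y \<and> infinite (topspace Y) \<and> \<not> in_class (Iqn I) (Iu I) Y) \<and>
     (\<exists>Y :: nat topology. normal_T2 Y \<and> infinite (topspace Y) \<and> \<not> in_class (Isigu I) (Iu I) Y))
    \<and>
   \<comment> \<open>(4)\<close>
    (\<forall>Y :: 'b topology. normal_T2 Y \<and> infinite (topspace Y) \<longrightarrow>
       \<not> in_class (Ip I) (Iu I) Y \<and> \<not> in_class (Iqn I) (Iu I) Y \<and> \<not> in_class (Isigu I) (Iu I) Y)"
proof -
  let ?P = "discrete_topology {0::nat}" and ?N = "discrete_topology (UNIV :: nat set)"
  have spaces: "normal_T2 ?P" "card (topspace ?P) = 1" "normal_T2 ?N" "infinite (topspace ?N)"
    by (simp_all add: normal_T2_discrete_topology)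
  have empty_in: "in_class (Ip I) (Iu J) Y \<and> in_class (Iqn I) (Iu J) Y \<and> in_class (Isigu I) (Iu J) Y"
    if "normal_T2 Y" and "topspace Y = {}" for Y :: "'b topology"
  proof -
    have "finite (topspace Y)"
      using that(2) by simp
    then show ?thesis
      using in_class_Iu_Iu_empty_space[OF assms(1,2) that] in_class_finite_space[OF assms(1)] by blast
  qed
  have point_not_in: "\<not> in_class (Ip I) (Iu J) ?P \<and> \<not> in_class (Iqn I) (Iu J) ?P \<and>
      \<not> in_class (Isigu I) (Iu J) ?P" if "I \<noteq> J"
    using not_in_class_Iu_Iu_if_ne[OF assms(1,2) that, of ?P] in_class_finite_space[OF assms(1), of ?P]
    by simp
  show ?thesis
    using spaces empty_in point_not_in in_class_Iu_iff_finite[OF assms(1)] assms(3) by metis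
qed

end
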